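(* Let $2\le n\le N$ and $\delta\in(0,1]$. With probability at least $1-\delta$, \[ \max_{1\le k\le n}\sigma^2_{>,k}\le \sigma^2+\frac{\sigma(b-a)(n-1)}{N-n+1}\sqrt{\frac{2\log(1/\delta)}{n-1}}. \] Similarly, if $1\le n\le N-2$, then with probability at least $1-\delta$, \[ \max_{n\le k\le N-1}\sigma^2_{<,k+1}\le \sigma^2+\frac{\sigma(b-a)(N-n-1)}{n+1}\sqrt{\frac{2\log(1/\delta)}{N-n-1}}. \]
   Context: Let $N\ge 2$ and let $\mathcal X=(x_1,\dots,x_N)$ be a finite population of real numbers (repetitions allowed). Let $(X_1,\dots,X_N)=(x_{\pi(1)},\dots,x_{\pi(N)})$, where $\pi$ is a uniformly random permutation of $\{1,\dots,N\}$. For $n\le N$, $(X_1,\dots,X_n)$ is therefore a sample of size $n$ drawn uniformly without replacement from $\mathcal X$. Let $\mu=\frac1N\sum_{i=1}^N x_i$, $\sigma^2=\frac1N\sum_{i=1}^N(x_i-\mu)^2$, $\sigma=\sqrt{\sigma^2}$, $a=\min_i x_i$ and $b=\max_i x_i$. Define the conditional variances \[ \sigma^2_{>,k}=\operatorname{Var}\big(X_k\mid X_1,\dots,X_{k-1}\big)\quad(1\le k\le N),\qquad \sigma^2_{<,j}=\operatorname{Var}\big(X_j\mid X_{j+1},\dots,X_N\big)\quad(1\le j\le N), \] with conditioning on the trivial $\sigma$-algebra when the list of conditioning variables is empty. *)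

theory Defs
  imports "HOL-Probability.Probability"
begin

text \<open>Population x 1, ..., x N (indices 1..N). The sample space is the set of
permutations of {1..N}, equipped with the uniform distribution; the k-th draw is
X k pi = x (pi k).\<close>

definition perms :: "nat \<Rightarrow> (nat \<Rightarrow> nat) set" where
  "perms N = {p. p permutes {1..N}}"

definition perm_pmf :: "nat \<Rightarrow> (nat \<Rightarrow> nat) pmf" where
  "perm_pmf N = pmf_of_set (perms N)"

definition draw :: "(nat \<Rightarrow> real) \<Rightarrow> nat \<Rightarrow> (nat \<Rightarrow> nat) \<Rightarrow> real" where
  "draw x k p = x (p k)"

definition pop_mean :: "nat \<Rightarrow> (nat \<Rightarrow> real) \<Rightarrow> real" where
  "pop_mean N x = (\<Sum>i=1..N. x i) / real N"

definition pop_var :: "nat \<Rightarrow> (nat \<Rightarrow> real) \<Rightarrow> real" where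
  "pop_var N x = (\<Sum>i=1..N. (x i - pop_mean N x)^2) / real N"

definition pop_min :: "nat \<Rightarrow> (nat \<Rightarrow> real) \<Rightarrow> real" where
  "pop_min N x = Min (x ` {1..N})"

definition pop_max :: "nat \<Rightarrow> (nat \<Rightarrow> real) \<Rightarrow> real" where
  "pop_max N x = Max (x ` {1..N})"

text \<open>The atom of the (finite) sigma-algebra generated by the draws X_i, i in J,
containing the outcome p.\<close>
definition atom :: "nat \<Rightarrow> (nat \<Rightarrow> real) \<Rightarrow> nat set \<Rightarrow> (nat \<Rightarrow> nat) \<Rightarrow> (nat \<Rightarrow> nat) set" where
  "atom N x J p = {q \<in> perms N. \<forall>i\<in>J. draw x i q = draw x i p}"

definition cond_exp :: "nat \<Rightarrow> (nat \<Rightarrow> real) \<Rightarrow> nat set \<Rightarrow> ((nat \<Rightarrow> nat) \<Rightarrow> real) \<Rightarrow> (nat \<Rightarrow> nat) \<Rightarrow> real" where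
  "cond_exp N x J f p = (\<Sum>q\<in>atom N x J p. f q) / real (card (atom N x J p))"

definition cond_var :: "nat \<Rightarrow> (nat \<Rightarrow> real) \<Rightarrow> nat set \<Rightarrow> ((nat \<Rightarrow> nat) \<Rightarrow> real) \<Rightarrow> (nat \<Rightarrow> nat) \<Rightarrow> real" where
  "cond_var N x J f p = cond_exp N x J (\<lambda>q. (f q - cond_exp N x J f q)^2) p"

text \<open>sigma^2_{>,k} = Var(X_k | X_1..X_{k-1}),  sigma^2_{<,j} = Var(X_j | X_{j+1}..X_N).\<close>
definition var_fwd :: "nat \<Rightarrow> (nat \<Rightarrow> real) \<Rightarrow> nat \<Rightarrow> (nat \<Rightarrow> nat) \<Rightarrow> real" where
  "var_fwd N x k = cond_var N x {1..<k} (draw x k)"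

definition var_bwd :: "nat \<Rightarrow> (nat \<Rightarrow> real) \<Rightarrow> nat \<Rightarrow> (nat \<Rightarrow> nat) \<Rightarrow> real" where
  "var_bwd N x j = cond_var N x {j<..N} (draw x j)"

end

theory Submission
  imports Defs
begin

(* Write y i = (x i - mu)^2, so sigma^2 is the population mean of y and y i <= (b - a)^2.
   The conditional variance of a draw X_t given the draws at positions J is at most the mean
   of y over the unobserved positions (cond_var_draw_le).  For the forward variances these are
   the positions k..N, so sigma^2_{>,k} <= Z_{k-1}, where Z_j is the "rest mean" of y over the
   items not yet drawn after j draws; the backward case is the same after reversing the order
   of the draws (reverse_pos).
   The rest means form a reverse martingale, so exp (lam * Z_j) is a submartingale and a
   counting form of Doob's maximal inequality (rest_mean_maximal_inequality) bounds the chance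
   that max_{j<=r} Z_j exceeds T by exp (- lam T) E exp (lam Z_r).  The moment generating
   function is bounded by comparing sampling without and with replacement (sum_prod_draws_le)
   and exp (-t) <= 1 - t + t^2/2; optimising lam yields the tail bound (rest_mean_max_tail). *)

lemma exp_neg_le_quad:
  fixes t :: real assumes "0 \<le> t"
  shows "exp (- t) \<le> 1 - t + t^2/2"
proof -
  let ?f = "\<lambda>t::real. 1 - t + t^2/2 - exp (- t)"
  have d: "\<And>t. (?f has_real_derivative (-1 + t + exp (-t))) (at t)"
    by (auto intro!: derivative_eq_intros simp: power2_eq_square)
  have "?f 0 \<le> ?f t"
  proof (rule DERIV_nonneg_imp_nondecreasing[OF assms])
    fix s :: real assume "0 \<le> s" "s \<le> t"
    show "\<exists>y. (?f has_real_derivative y) (at s) \<and> 0 \<le> y"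
      using d[of s] exp_ge_add_one_self[of "-s"] by (intro exI[of _ "-1 + s + exp (-s)"]) auto
  qed
  thus ?thesis by simp
qed

lemma power_secant_bound:
  fixes w :: real assumes "0 \<le> w"
  shows "real r * (1 - w) * w^r \<le> 1 - w^r"
proof (induction r)
  case 0 then show ?case by simp
next
  case (Suc r)
  have "real (Suc r) * (1 - w) * w ^ Suc r
      = real (Suc r) * (1-w) * w^r - real (Suc r) * (1-w)^2 * w^r"
    by (simp add: power2_eq_square algebra_simps)
  also have "\<dots> \<le> real r * (1 - w) * w^r + (1-w) * w^r"
    using assms by (simp add: algebra_simps)
  also have "\<dots> \<le> 1 - w^Suc r" using Suc by (simp add: algebra_simps)
  finally show ?case .
qed

lemma tangent_core:
  fixes w M :: real assumes "0 \<le> w" "real r \<le> M"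
  shows "(1 + M * (1 - w)) * w^r \<le> 1 + (M - real r) * (1 - w)"
proof -
  have sign: "0 \<le> (1 - w) * (1 - w^r)"
  proof (cases "w \<le> 1")
    case True
    then show ?thesis using assms(1) by (simp add: power_le_one)
  next
    case False
    then show ?thesis by (simp add: one_le_power mult_nonpos_nonpos)
  qed
  have "real r * ((1 - w) * (1 - w^r)) \<le> M * ((1 - w) * (1 - w^r))"
    using sign assms(2) by (intro mult_right_mono) auto
  then show ?thesis using power_secant_bound[OF assms(1), of r] by (simp add: algebra_simps)
qed

(* On 0 <= h <= A the function h * ((A - h)/(m - 1))^r lies below its tangent line at the
   mean value h = A/m. *)
lemma tangent_bound:
  fixes h A :: real and m r :: nat
  assumes "0 \<le> h" "h \<le> A" "2 \<le> m" "r \<le> m - 1"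
  shows "h * ((A - h) / (real m - 1))^r
    \<le> (A/real m)^(Suc r) + (A/real m)^r * (1 - real r / (real m - 1)) * (h - A/real m)"
proof (cases "A = 0")
  case True then show ?thesis using assms by simp
next
  case False
  then have A0: "0 < A" using assms by simp
  define \<mu> where "\<mu> = A / real m"
  have mu0: "0 < \<mu>" using A0 assms by (simp add: \<mu>_def)
  define w where "w = (A - h) / (real m - 1) / \<mu>"
  have m1: "real m - 1 > 0" using assms by simp
  have w0: "0 \<le> w" using assms m1 mu0 by (simp add: w_def)
  have hw: "h = \<mu> * (1 + (real m - 1) * (1 - w))"
    using m1 mu0 assms by (simp add: w_def \<mu>_def field_simps)
  have Aw: "(A - h) / (real m - 1) = \<mu> * w" using mu0 by (simp add: w_def)
  have rM: "real r \<le> real m - 1" using assms by linarith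
  have "h * ((A - h) / (real m - 1))^r = \<mu>^Suc r * ((1 + (real m - 1) * (1 - w)) * w^r)"
    unfolding Aw by (subst hw) (simp add: power_mult_distrib)
  also have "\<dots> \<le> \<mu>^Suc r * (1 + (real m - 1 - real r) * (1 - w))"
    using tangent_core[OF w0 rM] mu0 by (intro mult_left_mono) auto
  also have "\<dots> = \<mu>^Suc r + \<mu>^r * (1 - real r / (real m - 1)) * (h - \<mu>)"
    using m1 by (simp add: hw field_simps)
  finally show ?thesis by (simp add: \<mu>_def)
qed

lemma tangent_sum:
  fixes h :: "nat \<Rightarrow> real"
  assumes fin: "finite B" and cB: "card B = m" and m1: "1 \<le> m"
    and h0: "\<And>b. b \<in> B \<Longrightarrow> 0 \<le> h b" and r: "r \<le> m - 1"
  shows "(\<Sum>b\<in>B. h b * ((sum h B - h b) / (real m - 1))^r) \<le> real m * (sum h B / real m)^Suc r"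
proof (cases "m = 1")
  case True
  then show ?thesis using r by simp
next
  case False
  then have m2: "2 \<le> m" using m1 by simp
  let ?A = "sum h B"
  have hA: "h b \<le> ?A" if "b \<in> B" for b using member_le_sum[OF that] h0 fin by auto
  have "(\<Sum>b\<in>B. h b * ((?A - h b) / (real m - 1))^r)
      \<le> (\<Sum>b\<in>B. (?A/real m)^(Suc r) + (?A/real m)^r * (1 - real r / (real m - 1)) * (h b - ?A/real m))"
    by (intro sum_mono tangent_bound h0 hA m2 r) auto
  also have "\<dots> = real m * (?A/real m)^(Suc r)
      + (?A/real m)^r * (1 - real r / (real m - 1)) * (?A - real m * (?A / real m))"
    by (simp add: sum.distrib sum_distrib_left[symmetric] sum_subtractf cB)
  also have "\<dots> = real m * (?A/real m)^(Suc r)" using m1 by simp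
  finally show ?thesis .
qed

lemma jensen_exp:
  fixes f :: "'a \<Rightarrow> real"
  assumes "finite B" "B \<noteq> {}"
  shows "real (card B) * exp (sum f B / real (card B)) \<le> (\<Sum>b\<in>B. exp (f b))"
proof -
  let ?c = "sum f B / real (card B)"
  have cpos: "0 < real (card B)" using assms by (simp add: card_gt_0_iff)
  have "(\<Sum>b\<in>B. exp ?c * (1 + (f b - ?c))) \<le> (\<Sum>b\<in>B. exp (f b))"
  proof (rule sum_mono)
    fix b assume "b \<in> B"
    have "exp ?c * (1 + (f b - ?c)) \<le> exp ?c * exp (f b - ?c)"
      by (intro mult_left_mono exp_ge_add_one_self) auto
    then show "exp ?c * (1 + (f b - ?c)) \<le> exp (f b)" by (simp add: exp_diff)
  qed
  moreover have "(\<Sum>b\<in>B. exp ?c * (1 + (f b - ?c)))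
      = exp ?c * (real (card B) + sum f B - real (card B) * ?c)"
    by (simp add: sum_distrib_left[symmetric] sum.distrib sum_subtractf)
  moreover have "real (card B) * ?c = sum f B" using cpos by simp
  ultimately show ?thesis by (simp add: mult.commute[of "real (card B)"])
qed

lemma sum_sq_dev_mean_le:
  fixes f :: "'a \<Rightarrow> real"
  assumes "finite A" "A \<noteq> {}"
  shows "(\<Sum>q\<in>A. (f q - sum f A / real (card A))^2) \<le> (\<Sum>q\<in>A. (f q - c)^2)"
proof -
  define e where "e = sum f A / real (card A)"
  have cpos: "0 < real (card A)" using assms by (simp add: card_gt_0_iff)
  have se: "sum f A = real (card A) * e" using cpos by (simp add: e_def)
  have pt: "(f q - c)^2 - (f q - e)^2 = (e - c) * (2 * f q - (c + e))" for q
    by (simp add: power2_eq_square algebra_simps)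
  have "(\<Sum>q\<in>A. (f q - c)^2) - (\<Sum>q\<in>A. (f q - e)^2) = (e - c) * (\<Sum>q\<in>A. 2 * f q - (c + e))"
    by (simp only: sum_subtractf[symmetric] pt sum_distrib_left)
  also have "(\<Sum>q\<in>A. 2 * f q - (c + e)) = 2 * sum f A - real (card A) * (c + e)"
    by (simp add: sum_subtractf sum_distrib_left)
  also have "(e - c) * (2 * sum f A - real (card A) * (c + e)) = real (card A) * (e - c)^2"
    by (simp add: se power2_eq_square algebra_simps)
  finally have "(\<Sum>q\<in>A. (f q - c)^2) - (\<Sum>q\<in>A. (f q - e)^2) = real (card A) * (e - c)^2" .
  moreover have "0 \<le> real (card A) * (e - c)^2" by simp
  ultimately show ?thesis unfolding e_def[symmetric] by linarith
qed

lemma sum_permutes_eq: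
  assumes "p permutes S"
  shows "(\<Sum>l\<in>S. f (p l)) = (\<Sum>l\<in>S. f l)"
  using sum.permute[OF assms, of f] by (simp add: o_def)

(* A permutation of {k..N} is chosen by first choosing the image b of k and then a permutation
   of {k+1..N}; this is the "first draw" decomposition used in every induction below. *)
lemma sum_permutations_first:
  fixes f :: "(nat \<Rightarrow> nat) \<Rightarrow> 'a::comm_monoid_add"
  assumes "k \<le> N"
  shows "(\<Sum>p\<in>{p. p permutes {k..N}}. f p)
       = (\<Sum>b\<in>{k..N}. \<Sum>q\<in>{p. p permutes {Suc k..N}}. f (Transposition.transpose k b \<circ> q))"
proof -
  have "{k..N} = insert k {Suc k..N}" using assms by auto
  then show ?thesis using sum_over_permutations_insert[of "{Suc k..N}" k f] by simp
qed

lemma card_permutations_first: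
  assumes "k \<le> N"
  shows "real (card {p. p permutes {k..N}})
       = real (Suc N - k) * real (card {p. p permutes {Suc k..N}})"
proof -
  have "card {p. p permutes {k..N}} = fact (Suc N - k)"
    by (rule card_permutations) auto
  moreover have "card {p. p permutes {Suc k..N}} = fact (N - k)"
    by (rule card_permutations) auto
  moreover have "Suc N - k = Suc (N - k)" using assms by simp
  ultimately have "card {p. p permutes {k..N}} = (Suc N - k) * card {p. p permutes {Suc k..N}}"
    by simp
  then show ?thesis by (metis of_nat_mult)
qed

lemma sum_transpose_rest:
  fixes y :: "nat \<Rightarrow> 'a::ab_group_add"
  assumes "b \<in> {k..N}"
  shows "(\<Sum>i\<in>{Suc k..N}. y (Transposition.transpose k b i)) = (\<Sum>i\<in>{k..N}. y i) - y b"
proof -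
  have kN: "k \<le> N" using assms by simp
  have tp: "Transposition.transpose k b permutes {k..N}"
    using assms by (intro permutes_swap_id) auto
  have "(\<Sum>i\<in>{k..N}. y i) = (\<Sum>i\<in>{k..N}. y (Transposition.transpose k b i))"
    using sum_permutes_eq[OF tp, of y] by simp
  also have "\<dots> = y b + (\<Sum>i\<in>{Suc k..N}. y (Transposition.transpose k b i))"
    using kN by (simp add: sum.atLeast_Suc_atMost)
  finally show ?thesis by (simp add: algebra_simps)
qed

(* The rest mean Z_j: the average of y over the positions k+j..N, i.e. over the items not yet
   drawn after j draws starting at position k. *)
definition rest_mean :: "nat \<Rightarrow> (nat \<Rightarrow> real) \<Rightarrow> nat \<Rightarrow> nat \<Rightarrow> (nat \<Rightarrow> nat) \<Rightarrow> real" where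
  "rest_mean N y k j p = (\<Sum>l\<in>{k+j..N}. y (p l)) / real (Suc N - (k+j))"

lemma rest_mean_start:
  assumes "p permutes {k..N}"
  shows "rest_mean N y k 0 p = (\<Sum>i\<in>{k..N}. y i) / real (Suc N - k)"
  using sum_permutes_eq[OF assms, of y] by (simp add: rest_mean_def)

lemma rest_mean_shift:
  "rest_mean N y k (Suc j) (Transposition.transpose k b \<circ> q)
     = rest_mean N (y \<circ> Transposition.transpose k b) (Suc k) j q"
  by (simp add: rest_mean_def)

lemma population_mean_after_first:
  fixes y :: "nat \<Rightarrow> real"
  assumes "b \<in> {k..N}" "k < N"
  shows "(\<Sum>i\<in>{Suc k..N}. (y \<circ> Transposition.transpose k b) i) / real (Suc N - Suc k)
       = ((\<Sum>i\<in>{k..N}. y i) - y b) / (real (Suc N - k) - 1)"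
  using assms sum_transpose_rest[OF assms(1), of y] by (simp add: of_nat_diff)

(* The average of the leave-one-out means is the mean; with Jensen this is the one-step
   submartingale inequality for exp (lam * rest mean). *)
lemma jensen_leave_one_out:
  fixes y :: "nat \<Rightarrow> real"
  assumes "k < N"
  defines "m \<equiv> Suc N - k" and "A \<equiv> \<Sum>i\<in>{k..N}. y i"
  shows "real m * exp (lam * (A / real m)) \<le> (\<Sum>b\<in>{k..N}. exp (lam * ((A - y b) / (real m - 1))))"
proof -
  have cm: "card {k..N} = m" by (simp add: m_def)
  have m2: "2 \<le> m" using assms by (simp add: m_def)
  have "(\<Sum>b\<in>{k..N}. lam * ((A - y b) / (real m - 1))) = lam * ((real m * A - A) / (real m - 1))"
    using assms(1) by (simp add: sum_distrib_left[symmetric] sum_divide_distrib[symmetric] sum_subtractf cm A_def m_def of_nat_diff)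
  also have "\<dots> = real m * (lam * (A / real m))" using m2 by (simp add: field_simps)
  finally have avg: "(\<Sum>b\<in>{k..N}. lam * ((A - y b) / (real m - 1))) / real m
      = lam * (A / real m)" using m2 by simp
  have "real (card {k..N}) * exp ((\<Sum>b\<in>{k..N}. lam * ((A - y b) / (real m - 1))) / real (card {k..N}))
      \<le> (\<Sum>b\<in>{k..N}. exp (lam * ((A - y b) / (real m - 1))))"
    using assms(1) by (intro jensen_exp) auto
  then show ?thesis by (simp only: avg cm)
qed

lemma exp_rest_mean_submartingale:
  assumes "k + r \<le> N"
  shows "real (card {p. p permutes {k..N}}) * exp (lam * ((\<Sum>i\<in>{k..N}. y i) / real (Suc N - k)))
         \<le> (\<Sum>p\<in>{p. p permutes {k..N}}. exp (lam * rest_mean N y k r p))"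
  using assms
proof (induction r arbitrary: k y)
  case 0
  have "(\<Sum>p\<in>{p. p permutes {k..N}}. exp (lam * rest_mean N y k 0 p))
      = (\<Sum>p\<in>{p. p permutes {k..N}}. exp (lam * ((\<Sum>i\<in>{k..N}. y i) / real (Suc N - k))))"
    by (intro sum.cong refl) (simp add: rest_mean_start)
  then show ?case by simp
next
  case (Suc r)
  have kN: "k < N" using Suc.prems by simp
  define m where "m = Suc N - k"
  define A where "A = (\<Sum>i\<in>{k..N}. y i)"
  let ?P = "{p. p permutes {k..N}}" and ?P' = "{p. p permutes {Suc k..N}}"
  let ?tr = "Transposition.transpose k"
  have "real (card ?P) * exp (lam * (A / real m))
      = real (card ?P') * (real m * exp (lam * (A / real m)))"
    using kN by (simp add: card_permutations_first m_def)
  also have "\<dots> \<le> real (card ?P') * (\<Sum>b\<in>{k..N}. exp (lam * ((A - y b) / (real m - 1))))"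
    using jensen_leave_one_out[OF kN, of lam y] by (intro mult_left_mono) (simp_all add: m_def A_def)
  also have "\<dots> = (\<Sum>b\<in>{k..N}. real (card ?P') * exp (lam * ((\<Sum>i\<in>{Suc k..N}. (y \<circ> ?tr b) i)
                    / real (Suc N - Suc k))))"
    unfolding sum_distrib_left
    by (intro sum.cong refl) (simp only: population_mean_after_first[OF _ kN] A_def m_def)
  also have "\<dots> \<le> (\<Sum>b\<in>{k..N}. \<Sum>q\<in>?P'. exp (lam * rest_mean N (y \<circ> ?tr b) (Suc k) r q))"
    using Suc.prems by (intro sum_mono Suc.IH) auto
  also have "\<dots> = (\<Sum>p\<in>?P. exp (lam * rest_mean N y k (Suc r) p))"
    using kN by (simp add: sum_permutations_first rest_mean_shift)
  finally show ?case by (simp only: A_def m_def)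
qed

(* The exponential Markov bound for a single value: the indicator of z > T is at most
   exp (lam (z - T)). *)
lemma one_le_exp_shift:
  fixes lam T z :: real assumes "0 \<le> lam" "T \<le> z"
  shows "1 \<le> exp (- lam * T) * exp (lam * z)"
proof -
  have "0 \<le> lam * (z - T)" using assms by simp
  then show ?thesis by (simp add: exp_add[symmetric] algebra_simps)
qed

(* The induction is on r, splitting off the
   first draw; if T is below Z_0 the event is certain and the submartingale bound applies. *)
lemma rest_mean_maximal_inequality:
  assumes "k + r \<le> N" "0 \<le> lam"
  shows "(\<Sum>p\<in>{p. p permutes {k..N}}. if (\<exists>j\<le>r. T < rest_mean N y k j p) then 1 else 0)
         \<le> exp (- lam * T) * (\<Sum>p\<in>{p. p permutes {k..N}}. exp (lam * rest_mean N y k r p))"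
  using assms(1)
proof (induction r arbitrary: k y)
  case 0
  have "(if (\<exists>j\<le>0. T < rest_mean N y k j p) then 1 else 0)
      \<le> exp (- lam * T) * exp (lam * rest_mean N y k 0 p)" for p
    using one_le_exp_shift[OF assms(2), of T "rest_mean N y k 0 p"] by auto
  then show ?case by (simp add: sum_distrib_left sum_mono)
next
  case (Suc r)
  have kN: "k \<le> N" using Suc.prems by simp
  let ?P = "{p. p permutes {k..N}}" and ?P' = "{p. p permutes {Suc k..N}}"
  let ?tr = "Transposition.transpose k"
  define A0 where "A0 = (\<Sum>i\<in>{k..N}. y i) / real (Suc N - k)"
  show ?case
  proof (cases "T < A0")
    case True
    have "(\<Sum>p\<in>?P. if (\<exists>j\<le>Suc r. T < rest_mean N y k j p) then 1 else 0) \<le> real (card ?P) * 1"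
      using sum_mono[of ?P _ "\<lambda>_. 1::real"] by simp
    also have "\<dots> \<le> real (card ?P) * (exp (- lam * T) * exp (lam * A0))"
      using one_le_exp_shift[OF assms(2), of T A0] True by (intro mult_left_mono) auto
    also have "\<dots> \<le> exp (- lam * T) * (\<Sum>p\<in>?P. exp (lam * rest_mean N y k (Suc r) p))"
      using exp_rest_mean_submartingale[OF Suc.prems, of lam y]
      by (simp add: A0_def mult.left_commute)
    finally show ?thesis .
  next
    case False
    (* Z_0 = A0 <= T, so the event only concerns the rest means after the first draw. *)
    have first: "(\<exists>j\<le>Suc r. T < rest_mean N y k j p) = (\<exists>j\<le>r. T < rest_mean N y k (Suc j) p)"
      if "p \<in> ?P" for p
    proof -
      have "\<not> T < rest_mean N y k 0 p" using that False by (simp add: rest_mean_start A0_def)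
      then show ?thesis by (metis Suc_le_mono not0_implies_Suc le0)
    qed
    have "(\<Sum>p\<in>?P. if (\<exists>j\<le>Suc r. T < rest_mean N y k j p) then 1 else 0)
        = (\<Sum>p\<in>?P. if (\<exists>j\<le>r. T < rest_mean N y k (Suc j) p) then 1 else (0::real))"
      using first by (intro sum.cong) auto
    also have "\<dots> = (\<Sum>b\<in>{k..N}. \<Sum>q\<in>?P'.
             if (\<exists>j\<le>r. T < rest_mean N (y \<circ> ?tr b) (Suc k) j q) then 1 else (0::real))"
      using kN by (simp add: sum_permutations_first rest_mean_shift)
    also have "\<dots> \<le> (\<Sum>b\<in>{k..N}. exp (- lam * T)
                      * (\<Sum>q\<in>?P'. exp (lam * rest_mean N (y \<circ> ?tr b) (Suc k) r q)))"
      using Suc.prems by (intro sum_mono Suc.IH) auto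
    also have "\<dots> = exp (- lam * T) * (\<Sum>p\<in>?P. exp (lam * rest_mean N y k (Suc r) p))"
      using kN by (simp add: sum_permutations_first rest_mean_shift sum_distrib_left)
    finally show ?thesis .
  qed
qed

lemma prod_transpose_first:
  fixes h :: "nat \<Rightarrow> real"
  assumes "q permutes {Suc k..N}"
  shows "(\<Prod>l\<in>{k..<k+Suc r}. h ((Transposition.transpose k b \<circ> q) l))
       = h b * (\<Prod>l\<in>{Suc k..<Suc k+r}. (h \<circ> Transposition.transpose k b) (q l))"
proof -
  have split: "(\<Prod>l\<in>{k..<k+Suc r}. g l) = g k * (\<Prod>l\<in>{Suc k..<Suc k+r}. g l)"
    for g :: "nat \<Rightarrow> real"
    using prod.atLeast_Suc_lessThan[of k "k + Suc r" g] by simp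
  have "q k = k" using assms by (auto intro: permutes_not_in)
  then show ?thesis unfolding split by (simp add: o_def)
qed

(* Sampling without replacement is dominated by sampling with replacement for products of a
   nonnegative function: the average over permutations of prod_{l<r} h (p (k+l)) is at most the
   r-th power of the mean of h. *)
lemma sum_prod_draws_le:
  fixes h :: "nat \<Rightarrow> real"
  assumes "k + r \<le> Suc N" "\<And>i. 0 \<le> h i"
  shows "(\<Sum>p\<in>{p. p permutes {k..N}}. \<Prod>l\<in>{k..<k+r}. h (p l))
         \<le> real (card {p. p permutes {k..N}}) * ((\<Sum>i\<in>{k..N}. h i) / real (Suc N - k))^r"
  using assms
proof (induction r arbitrary: k h)
  case 0
  then show ?case by simp
next
  case (Suc r)
  have kN: "k \<le> N" using Suc.prems by simp
  let ?P = "{p. p permutes {k..N}}" and ?P' = "{p. p permutes {Suc k..N}}"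
  let ?tr = "Transposition.transpose k"
  define m where "m = Suc N - k"
  define A where "A = (\<Sum>i\<in>{k..N}. h i)"
  have m1: "1 \<le> m" using kN by (simp add: m_def)
  have rN: "real N - real k = real m - 1" using kN by (simp add: m_def of_nat_diff)
  have "(\<Sum>p\<in>?P. \<Prod>l\<in>{k..<k+Suc r}. h (p l))
      = (\<Sum>b\<in>{k..N}. h b * (\<Sum>q\<in>?P'. \<Prod>l\<in>{Suc k..<Suc k+r}. (h \<circ> ?tr b) (q l)))"
    unfolding sum_permutations_first[OF kN] sum_distrib_left
    by (intro sum.cong refl prod_transpose_first) simp
  also have "\<dots> \<le> (\<Sum>b\<in>{k..N}. h b * (real (card ?P')
        * ((\<Sum>i\<in>{Suc k..N}. (h \<circ> ?tr b) i) / real (Suc N - Suc k))^r))"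
    using Suc.prems by (intro sum_mono mult_left_mono Suc.IH) auto
  also have "\<dots> = real (card ?P') * (\<Sum>b\<in>{k..N}. h b * ((A - h b) / (real m - 1))^r)"
    by (simp add: sum_distrib_left sum_transpose_rest A_def rN algebra_simps)
  also have "\<dots> \<le> real (card ?P') * (real m * (A / real m)^Suc r)"
    using tangent_sum[of "{k..N}" m h r] Suc.prems m1
    by (intro mult_left_mono) (auto simp: A_def m_def)
  also have "\<dots> = real (card ?P) * (A / real m)^Suc r"
    using kN by (simp add: card_permutations_first m_def)
  finally show ?case by (simp only: A_def m_def)
qed

lemma exp_rest_mean_as_product:
  fixes y :: "nat \<Rightarrow> real"
  assumes p: "p permutes {1..N}" and r: "r < N"
  defines "M \<equiv> real N - real r"
  shows "exp (lam * rest_mean N y 1 r p)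
       = exp (lam * (\<Sum>i\<in>{1..N}. y i) / M) * (\<Prod>l\<in>{1..<1+r}. exp (- (lam / M) * y (p l)))"
proof -
  define D where "D = (\<Sum>l\<in>{1..<1+r}. y (p l))"
  define Q where "Q = (\<Sum>i\<in>{1..N}. y i)"
  have un: "{1..N} = {1..<1+r} \<union> {1+r..N}" using r by auto
  have "Q = (\<Sum>l\<in>{1..N}. y (p l))" using sum_permutes_eq[OF p, of y] by (simp add: Q_def)
  also have "\<dots> = D + (\<Sum>l\<in>{1+r..N}. y (p l))"
    unfolding D_def by (subst un, rule sum.union_disjoint) auto
  finally have rest: "(\<Sum>l\<in>{1+r..N}. y (p l)) = Q - D" by simp
  have "real (Suc N - (1 + r)) = M" using r by (simp add: M_def of_nat_diff)
  then have Z: "rest_mean N y 1 r p = (Q - D) / M" by (simp only: rest_mean_def rest)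
  have "0 < M" using r by (simp add: M_def)
  then have "lam * rest_mean N y 1 r p = lam * Q / M + (\<Sum>l\<in>{1..<1+r}. - (lam / M) * y (p l))"
    unfolding Z sum_distrib_left[symmetric] D_def[symmetric] by (simp add: field_simps)
  then show ?thesis by (simp only: Q_def exp_add exp_sum[OF finite_atLeastLessThan])
qed

lemma mean_exp_neg_le:
  fixes y :: "'a \<Rightarrow> real"
  assumes S: "finite S" "S \<noteq> {}" and a: "0 \<le> a"
    and y0: "\<And>i. i \<in> S \<Longrightarrow> 0 \<le> y i" and yc: "\<And>i. i \<in> S \<Longrightarrow> (y i)^2 \<le> c2 * y i"
  defines "\<mu> \<equiv> sum y S / real (card S)"
  shows "(\<Sum>i\<in>S. exp (- a * y i)) / real (card S) \<le> exp (- a * \<mu> + a^2 * c2 * \<mu> / 2)"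
proof -
  have n0: "0 < real (card S)" using S by (simp add: card_gt_0_iff)
  have pointwise: "exp (- a * y i) \<le> 1 - a * y i + a^2 * c2 * y i / 2" if "i \<in> S" for i
  proof -
    have "exp (- a * y i) \<le> 1 - a * y i + a^2 * (y i)^2 / 2"
      using exp_neg_le_quad[of "a * y i"] a y0[OF that] by (simp add: power_mult_distrib)
    also have "a^2 * (y i)^2 \<le> a^2 * (c2 * y i)" using yc[OF that] by (intro mult_left_mono) auto
    finally show ?thesis by simp
  qed
  have "(\<Sum>i\<in>S. exp (- a * y i)) \<le> (\<Sum>i\<in>S. 1 - a * y i + a^2 * c2 * y i / 2)"
    by (intro sum_mono pointwise)
  also have "\<dots> = (\<Sum>i\<in>S. 1 + (a^2 * c2 / 2 - a) * y i)"
    by (simp add: algebra_simps)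
  also have "\<dots> = real (card S) + (a^2 * c2 / 2 - a) * sum y S"
    by (simp add: sum.distrib sum_distrib_left[symmetric])
  also have "\<dots> = real (card S) * (1 + (- a * \<mu> + a^2 * c2 * \<mu> / 2))"
    using n0 by (simp add: \<mu>_def field_simps)
  also have "\<dots> \<le> real (card S) * exp (- a * \<mu> + a^2 * c2 * \<mu> / 2)"
    by (intro mult_left_mono exp_ge_add_one_self) simp
  finally show ?thesis using n0 by (simp add: field_simps)
qed

lemma exp_rest_mean_mgf:
  fixes y :: "nat \<Rightarrow> real"
  assumes r: "r < N" and lam: "0 \<le> lam" and y0: "\<And>i. i \<in> {1..N} \<Longrightarrow> 0 \<le> y i"
    and yc: "\<And>i. i \<in> {1..N} \<Longrightarrow> (y i)^2 \<le> c2 * y i"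
  defines "\<mu> \<equiv> (\<Sum>i\<in>{1..N}. y i) / real N" and "M \<equiv> real N - real r"
  shows "(\<Sum>p\<in>{p. p permutes {1..N}}. exp (lam * rest_mean N y 1 r p))
     \<le> real (card {p. p permutes {1..N}}) * exp (lam * \<mu> + real r * lam^2 * c2 * \<mu> / (2 * M^2))"
proof -
  let ?P = "{p. p permutes {1..N}}"
  define Q where "Q = (\<Sum>i\<in>{1..N}. y i)"
  define a where "a = lam / M"
  define h where "h = (\<lambda>i. exp (- a * y i))"
  have M0: "0 < M" using r by (simp add: M_def)
  have N0: "0 < real N" using r by simp
  have "(\<Sum>p\<in>?P. exp (lam * rest_mean N y 1 r p))
      = (\<Sum>p\<in>?P. exp (lam * Q / M) * (\<Prod>l\<in>{1..<1+r}. h (p l)))"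
    by (intro sum.cong refl) (simp only: mem_Collect_eq exp_rest_mean_as_product[OF _ r] h_def a_def M_def Q_def)
  also have "\<dots> = exp (lam * Q / M) * (\<Sum>p\<in>?P. \<Prod>l\<in>{1..<1+r}. h (p l))"
    by (rule sum_distrib_left[symmetric])
  also have "\<dots> \<le> exp (lam * Q / M) * (real (card ?P) * ((\<Sum>i\<in>{1..N}. h i) / real N)^r)"
    using sum_prod_draws_le[of 1 r N h] r by (intro mult_left_mono) (auto simp: h_def)
  also have "\<dots> \<le> exp (lam * Q / M) * (real (card ?P) * exp (- a * \<mu> + a^2 * c2 * \<mu> / 2)^r)"
    using mean_exp_neg_le[of "{1..N}" a y c2] r lam M0 y0 yc
    by (intro mult_left_mono power_mono) (auto simp: h_def a_def \<mu>_def sum_nonneg)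
  also have "\<dots> = real (card ?P) * exp (lam * Q / M + real r * (- a * \<mu> + a^2 * c2 * \<mu> / 2))"
    by (simp add: exp_add exp_of_nat_mult[symmetric])
  also have "lam * Q / M + real r * (- a * \<mu> + a^2 * c2 * \<mu> / 2)
      = lam * \<mu> + real r * lam^2 * c2 * \<mu> / (2 * M^2)"
  proof -
    have QN: "Q = real N * \<mu>" and NM: "real N = M + real r"
      using N0 by (simp_all add: \<mu>_def Q_def M_def)
    show ?thesis using M0 unfolding QN NM a_def by (simp add: field_simps power2_eq_square)
  qed
  finally show ?thesis .
qed

(* The optimal choice of lam in the Chernoff bound exp (- lam T) E exp (lam Z_r). *)
lemma chernoff_choice:
  fixes s2 c L rr M :: real
  assumes s: "0 < s2" and c: "0 < c" and L: "0 < L" and rr: "0 < rr" and M: "0 < M"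
  defines "\<epsilon> \<equiv> sqrt s2 * c * rr / M * sqrt (2 * L / rr)"
  defines "lam \<equiv> \<epsilon> * M^2 / (rr * c^2 * s2)"
  shows "0 \<le> lam" "- lam * (s2 + \<epsilon>) + (lam * s2 + rr * lam^2 * c^2 * s2 / (2 * M^2)) = - L"
proof -
  show "0 \<le> lam" using s c L rr M by (simp add: \<epsilon>_def lam_def)
  have e2: "\<epsilon>^2 = 2 * s2 * c^2 * rr * L / M^2"
  proof -
    have "\<epsilon>^2 = (sqrt s2)^2 * c^2 * rr^2 / M^2 * (sqrt (2 * L / rr))^2"
      by (simp add: \<epsilon>_def power_mult_distrib power_divide)
    also have "\<dots> = s2 * c^2 * rr^2 / M^2 * (2 * L / rr)"
      using s L rr by (simp add: real_sqrt_pow2)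
    also have "\<dots> = 2 * s2 * c^2 * rr * L / M^2" using rr by (simp add: field_simps power2_eq_square)
    finally show ?thesis .
  qed
  have "- lam * (s2 + \<epsilon>) + (lam * s2 + rr * lam^2 * c^2 * s2 / (2 * M^2))
      = - (\<epsilon>^2 * M^2 / (2 * rr * c^2 * s2))"
    using s c rr M by (simp add: lam_def field_simps power2_eq_square)
  also have "\<dots> = - L" using s c rr M unfolding e2 by (simp add: field_simps power2_eq_square)
  finally show "- lam * (s2 + \<epsilon>) + (lam * s2 + rr * lam^2 * c^2 * s2 / (2 * M^2)) = - L" .
qed

lemma rest_mean_max_tail_exp:
  fixes y :: "nat \<Rightarrow> real"
  assumes r: "1 \<le> r" "r < N" and y0: "\<And>i. i \<in> {1..N} \<Longrightarrow> 0 \<le> y i"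
    and yc: "\<And>i. i \<in> {1..N} \<Longrightarrow> (y i)^2 \<le> c^2 * y i"
    and c: "0 < c" and L: "0 < L"
  defines "\<mu> \<equiv> (\<Sum>i\<in>{1..N}. y i) / real N"
  assumes \<mu>: "0 < \<mu>"
  defines "T \<equiv> \<mu> + sqrt \<mu> * c * real r / (real N - real r) * sqrt (2 * L / real r)"
  shows "(\<Sum>p\<in>{p. p permutes {1..N}}. if (\<exists>j\<le>r. T < rest_mean N y 1 j p) then 1 else 0)
         \<le> exp (- L) * real (card {p. p permutes {1..N}})"
proof -
  let ?P = "{p. p permutes {1..N}}"
  define M where "M = real N - real r"
  define \<epsilon> where "\<epsilon> = sqrt \<mu> * c * real r / M * sqrt (2 * L / real r)"
  define lam where "lam = \<epsilon> * M^2 / (real r * c^2 * \<mu>)"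
  have rr: "0 < real r" and M0: "0 < M" using r by (simp_all add: M_def)
  have lam0: "0 \<le> lam"
    and ex: "- lam * (\<mu> + \<epsilon>) + (lam * \<mu> + real r * lam^2 * c^2 * \<mu> / (2 * M^2)) = - L"
    using chernoff_choice[OF \<mu> c L rr M0] by (simp_all add: \<epsilon>_def lam_def)
  have T': "T = \<mu> + \<epsilon>" by (simp add: T_def \<epsilon>_def M_def)
  have "(\<Sum>p\<in>?P. if (\<exists>j\<le>r. T < rest_mean N y 1 j p) then 1 else 0)
      \<le> exp (- lam * T) * (\<Sum>p\<in>?P. exp (lam * rest_mean N y 1 r p))"
    using rest_mean_maximal_inequality[of 1 r N lam T y] r lam0 by simp
  also have "\<dots> \<le> exp (- lam * T)
      * (real (card ?P) * exp (lam * \<mu> + real r * lam^2 * c^2 * \<mu> / (2 * M^2)))"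
    using exp_rest_mean_mgf[of r N lam y "c^2"] r lam0 y0 yc
    by (intro mult_left_mono) (simp_all add: \<mu>_def M_def)
  also have "\<dots> = real (card ?P)
      * exp (- lam * (\<mu> + \<epsilon>) + (lam * \<mu> + real r * lam^2 * c^2 * \<mu> / (2 * M^2)))"
    unfolding T' exp_add by (simp only: ac_simps)
  also have "\<dots> = exp (- L) * real (card ?P)" unfolding ex by (rule mult.commute)
  finally show ?thesis .
qed

lemma rest_mean_max_tail:
  fixes y :: "nat \<Rightarrow> real"
  assumes r: "1 \<le> r" "r < N" and y0: "\<And>i. i \<in> {1..N} \<Longrightarrow> 0 \<le> y i"
    and yc: "\<And>i. i \<in> {1..N} \<Longrightarrow> y i \<le> c^2" and c: "0 \<le> c" and \<delta>: "0 < \<delta>" "\<delta> \<le> 1"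
  defines "\<mu> \<equiv> (\<Sum>i\<in>{1..N}. y i) / real N"
  defines "T \<equiv> \<mu> + sqrt \<mu> * c * real r / (real N - real r) * sqrt (2 * ln (1 / \<delta>) / real r)"
  shows "(\<Sum>p\<in>{p. p permutes {1..N}}. if (\<exists>j\<le>r. T < rest_mean N y 1 j p) then 1 else 0)
         \<le> \<delta> * real (card {p. p permutes {1..N}})"
proof -
  let ?P = "{p. p permutes {1..N}}"
  let ?count = "\<Sum>p\<in>?P. if (\<exists>j\<le>r. T < rest_mean N y 1 j p) then 1 else (0::real)"
  have \<mu>0: "0 \<le> \<mu>" unfolding \<mu>_def using y0 by (intro divide_nonneg_nonneg sum_nonneg) auto
  consider "\<delta> = 1" | "\<mu> = 0" | "\<delta> < 1" "0 < \<mu>" using \<delta> \<mu>0 by linarith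
  then show ?thesis
  proof cases
    case 1
    have "?count \<le> (\<Sum>p\<in>?P. 1)" by (intro sum_mono) auto
    then show ?thesis using 1 by simp
  next
    case 2
    then have "(\<Sum>i\<in>{1..N}. y i) = 0" using r by (simp add: \<mu>_def)
    then have yz: "y i = 0" if "i \<in> {1..N}" for i
      using sum_nonneg_eq_0_iff[of "{1..N}" y] y0 that by blast
    have "rest_mean N y 1 j p = 0" if "p \<in> ?P" for p j
    proof -
      have "y (p l) = 0" if "l \<in> {1+j..N}" for l
        using yz permutes_in_image[of p "{1..N}" l] \<open>p \<in> ?P\<close> that by simp
      then show ?thesis by (simp add: rest_mean_def)
    qed
    moreover have "T = 0" using 2 by (simp add: T_def)
    ultimately have "?count = 0" by (intro sum.neutral) auto
    then show ?thesis using \<delta> by simp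
  next
    case 3
    then have L: "0 < ln (1 / \<delta>)" using \<delta> by simp
    have "(\<Sum>i\<in>{1..N}. y i) \<le> real N * c^2"
      using sum_bounded_above[of "{1..N}" y "c^2"] yc by simp
    then have "\<mu> \<le> c^2" using r by (simp add: \<mu>_def divide_le_eq mult.commute)
    then have "c \<noteq> 0" using 3 by auto
    then have c0: "0 < c" using c by simp
    have yc2: "(y i)^2 \<le> c^2 * y i" if "i \<in> {1..N}" for i
      using mult_right_mono[OF yc[OF that] y0[OF that]] by (simp add: power2_eq_square)
    have pos: "0 < (\<Sum>i\<in>{1..N}. y i) / real N" using 3 by (simp add: \<mu>_def)
    have "?count \<le> exp (- ln (1 / \<delta>)) * real (card ?P)"
      unfolding T_def \<mu>_def by (rule rest_mean_max_tail_exp[OF r y0 yc2 c0 L pos])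
    also have "exp (- ln (1 / \<delta>)) = \<delta>" using \<delta>(1) by (simp add: ln_div)
    finally show ?thesis .
  qed
qed

lemma finite_perms: "finite (perms N)"
  by (simp add: perms_def finite_permutations)

lemma atom_self: "p \<in> perms N \<Longrightarrow> p \<in> atom N x J p"
  by (simp add: atom_def)

lemma atom_eq: "q \<in> atom N x J p \<Longrightarrow> atom N x J q = atom N x J p"
  by (auto simp: atom_def)

lemma finite_atom: "finite (atom N x J p)"
  using finite_perms by (rule finite_subset[rotated]) (auto simp: atom_def)

lemma cond_var_le_sq_dev:
  assumes "p \<in> perms N"
  shows "cond_var N x J f p \<le> (\<Sum>q\<in>atom N x J p. (f q - c)^2) / real (card (atom N x J p))"
proof -
  let ?A = "atom N x J p"
  have ce: "cond_exp N x J f q = sum f ?A / real (card ?A)" if "q \<in> ?A" for q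
    using atom_eq[OF that] by (simp add: cond_exp_def)
  have "cond_var N x J f p = (\<Sum>q\<in>?A. (f q - sum f ?A / real (card ?A))^2) / real (card ?A)"
    unfolding cond_var_def cond_exp_def[of N x J "\<lambda>q. (f q - cond_exp N x J f q)^2"]
    by (simp add: ce cong: sum.cong)
  also have "\<dots> \<le> (\<Sum>q\<in>?A. (f q - c)^2) / real (card ?A)"
    using atom_self[OF assms, of x J] finite_atom[of N x J p]
    by (intro divide_right_mono sum_sq_dev_mean_le) auto
  finally show ?thesis .
qed

(* Exchangeability within an atom: swapping two unobserved positions t and l maps the atom onto
   itself, so the draws at t and l have the same distribution on it. *)
lemma atom_sum_swap:
  assumes t: "t \<in> {1..N}" "t \<notin> J" and l: "l \<in> {1..N}" "l \<notin> J"
  shows "(\<Sum>q\<in>atom N x J p. g (x (q t))) = (\<Sum>q\<in>atom N x J p. g (x (q l)))"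
proof -
  let ?tr = "Transposition.transpose t l"
  have trp: "?tr permutes {1..N}" using t l by (intro permutes_swap_id) auto
  have mem: "q \<circ> ?tr \<in> atom N x J p" if "q \<in> atom N x J p" for q
  proof -
    have "q \<circ> ?tr permutes {1..N}"
      using that permutes_compose[OF trp, of q] by (simp add: atom_def perms_def)
    moreover have "(q \<circ> ?tr) i = q i" if "i \<in> J" for i
    proof -
      have "i \<noteq> t" "i \<noteq> l" using that t l by auto
      then show ?thesis by simp
    qed
    ultimately show ?thesis using that by (simp add: atom_def perms_def draw_def)
  qed
  have inv: "q \<circ> ?tr \<circ> ?tr = q" for q :: "nat \<Rightarrow> nat"
    by (simp add: o_assoc[symmetric])
  show ?thesis
    by (rule sum.reindex_bij_witness[of _ "\<lambda>q. q \<circ> ?tr" "\<lambda>q. q \<circ> ?tr"]) (simp_all add: mem inv)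
qed

lemma atom_sum_unobserved:
  fixes g :: "real \<Rightarrow> 'a::ab_group_add"
  assumes q: "q \<in> atom N x J p" and p: "p \<in> perms N" and J: "J \<subseteq> {1..N}"
  shows "(\<Sum>l\<in>{1..N}-J. g (x (q l))) = (\<Sum>l\<in>{1..N}-J. g (x (p l)))"
proof -
  have qp: "q permutes {1..N}" and pp: "p permutes {1..N}"
    using q p by (simp_all add: atom_def perms_def)
  have "(\<Sum>l\<in>{1..N}. g (x (q l))) = (\<Sum>l\<in>{1..N}. g (x (p l)))"
    using sum_permutes_eq[OF qp, of "\<lambda>v. g (x v)"] sum_permutes_eq[OF pp, of "\<lambda>v. g (x v)"] by simp
  moreover have "(\<Sum>l\<in>J. g (x (q l))) = (\<Sum>l\<in>J. g (x (p l)))"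
    using q by (simp add: atom_def draw_def)
  ultimately show ?thesis unfolding sum_diff[OF finite_atLeastAtMost J] by simp
qed

(* The conditional variance of the draw at an unobserved position t is at most the mean of
   (x - c)^2 over the unobserved positions: average the previous bound over all such t. *)
lemma cond_var_draw_le:
  assumes p: "p \<in> perms N" and J: "J \<subseteq> {1..N}" and t: "t \<in> {1..N}" "t \<notin> J"
  shows "cond_var N x J (draw x t) p \<le> (\<Sum>l\<in>{1..N}-J. (x (p l) - c)^2) / real (card ({1..N}-J))"
proof -
  define A where "A = atom N x J p"
  define R where "R = {1..N} - J"
  have cA: "0 < real (card A)"
    using finite_atom[of N x J p] atom_self[OF p, of x J] by (auto simp: A_def card_gt_0_iff)
  have cR: "0 < real (card R)" using t by (auto simp: R_def card_gt_0_iff)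
  have swap: "(\<Sum>q\<in>A. (x (q t) - c)^2) = (\<Sum>q\<in>A. (x (q l) - c)^2)" if "l \<in> R" for l
    unfolding A_def using t that by (intro atom_sum_swap[where g="\<lambda>v. (v - c)^2"]) (auto simp: R_def)
  have "real (card R) * (\<Sum>q\<in>A. (x (q t) - c)^2) = (\<Sum>l\<in>R. \<Sum>q\<in>A. (x (q t) - c)^2)"
    by simp
  also have "\<dots> = (\<Sum>l\<in>R. \<Sum>q\<in>A. (x (q l) - c)^2)"
    by (rule sum.cong[OF refl]) (rule swap)
  also have "\<dots> = (\<Sum>q\<in>A. \<Sum>l\<in>R. (x (q l) - c)^2)" by (rule sum.swap)
  also have "\<dots> = real (card A) * (\<Sum>l\<in>R. (x (p l) - c)^2)"
    using atom_sum_unobserved[OF _ p J, where g="\<lambda>v. (v - c)^2"] by (simp add: A_def R_def)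
  finally have key: "real (card R) * (\<Sum>q\<in>A. (x (q t) - c)^2)
      = real (card A) * (\<Sum>l\<in>R. (x (p l) - c)^2)" .
  have "cond_var N x J (draw x t) p \<le> (\<Sum>q\<in>A. (x (q t) - c)^2) / real (card A)"
    using cond_var_le_sq_dev[OF p, of x J "draw x t" c] by (simp add: A_def draw_def)
  also have "\<dots> = (\<Sum>l\<in>R. (x (p l) - c)^2) / real (card R)"
    using key cA cR by (simp add: field_simps)
  finally show ?thesis by (simp add: R_def)
qed

lemma pop_mean_bounds:
  assumes "1 \<le> N"
  shows "pop_min N x \<le> pop_mean N x" "pop_mean N x \<le> pop_max N x"
proof -
  have N0: "0 < real N" using assms by simp
  have "real (card {1..N}) * pop_min N x \<le> (\<Sum>i\<in>{1..N}. x i)"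
    by (rule sum_bounded_below) (simp add: pop_min_def)
  then show "pop_min N x \<le> pop_mean N x" using N0 by (simp add: pop_mean_def field_simps)
  have "(\<Sum>i\<in>{1..N}. x i) \<le> real (card {1..N}) * pop_max N x"
    by (rule sum_bounded_above) (simp add: pop_max_def)
  then show "pop_mean N x \<le> pop_max N x" using N0 by (simp add: pop_mean_def field_simps)
qed

lemma pop_sq_dev_le_range:
  assumes "1 \<le> N" "i \<in> {1..N}"
  shows "(x i - pop_mean N x)^2 \<le> (pop_max N x - pop_min N x)^2"
proof -
  have "pop_min N x \<le> x i" "x i \<le> pop_max N x"
    using assms(2) by (simp_all add: pop_min_def pop_max_def)
  then have "\<bar>x i - pop_mean N x\<bar> \<le> pop_max N x - pop_min N x"
    using pop_mean_bounds[OF assms(1), of x] by (simp add: abs_le_iff)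
  then show ?thesis by (metis abs_ge_zero power2_abs power_mono)
qed

lemma prob_from_count:
  assumes fin: "finite S" and ne: "S \<noteq> {}"
    and BG: "\<And>p. p \<in> S \<Longrightarrow> \<not> G p \<Longrightarrow> B p"
    and cnt: "(\<Sum>p\<in>S. if B p then 1 else 0) \<le> \<delta> * real (card S)"
  shows "measure_pmf.prob (pmf_of_set S) {p. G p} \<ge> 1 - \<delta>"
proof -
  have cS: "0 < real (card S)" using fin ne by (simp add: card_gt_0_iff)
  have split: "card S = card (S \<inter> {p. G p}) + card {p\<in>S. \<not> G p}"
    using fin by (subst card_Un_disjoint[symmetric]) (auto intro: arg_cong[where f=card])
  have "card {p\<in>S. \<not> G p} \<le> card {p\<in>S. B p}"
    using fin BG by (intro card_mono) auto
  also have "real (card {p\<in>S. B p}) = (\<Sum>p\<in>S. if B p then 1 else 0)"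
    using fin by (simp add: sum.If_cases Int_def)
  finally have "real (card {p\<in>S. \<not> G p}) \<le> \<delta> * real (card S)"
    using cnt by linarith
  then have "(1 - \<delta>) * real (card S) \<le> real (card (S \<inter> {p. G p}))"
    using split by (simp add: algebra_simps)
  moreover have "measure_pmf.prob (pmf_of_set S) {p. G p} = real (card (S \<inter> {p. G p})) / real (card S)"
    by (rule measure_pmf_of_set[OF ne fin])
  ultimately show ?thesis using cS by (simp add: le_divide_eq)
qed

(* The general form of both halves of the theorem: if every bad permutation p makes some rest
   mean Z_j (p o phi), j <= r, of y = (x - mu)^2 exceed T, and phi is a bijection of the sample
   space, then the good event has probability at least 1 - delta. *)
lemma prob_good_from_rest_mean:
  fixes \<phi> :: "(nat \<Rightarrow> nat) \<Rightarrow> (nat \<Rightarrow> nat)"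
  assumes \<delta>: "0 < \<delta>" "\<delta> \<le> 1" and r: "1 \<le> r" "r < N"
    and \<phi>: "bij_betw \<phi> (perms N) (perms N)"
    and bad: "\<And>p. p \<in> perms N \<Longrightarrow> \<not> G p
                 \<Longrightarrow> \<exists>j\<le>r. T < rest_mean N (\<lambda>i. (x i - pop_mean N x)^2) 1 j (\<phi> p)"
    and T: "T = pop_var N x + sqrt (pop_var N x) * (pop_max N x - pop_min N x) * real r
               / (real N - real r) * sqrt (2 * ln (1 / \<delta>) / real r)"
  shows "measure_pmf.prob (perm_pmf N) {p. G p} \<ge> 1 - \<delta>"
proof -
  define y where "y = (\<lambda>i. (x i - pop_mean N x)^2)"
  define c where "c = pop_max N x - pop_min N x"
  have N1: "1 \<le> N" using r by simp
  have ne: "perms N \<noteq> {}" using permutes_id[of "{1..N}"] unfolding perms_def by blast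
  have c0: "0 \<le> c"
    using pop_mean_bounds[OF N1, of x] by (simp add: c_def)
  have yc: "y i \<le> c^2" if "i \<in> {1..N}" for i
    using pop_sq_dev_le_range[OF N1 that] by (simp add: y_def c_def)
  have "(\<Sum>p\<in>perms N. if (\<exists>j\<le>r. T < rest_mean N y 1 j (\<phi> p)) then 1 else 0)
      = (\<Sum>p\<in>perms N. if (\<exists>j\<le>r. T < rest_mean N y 1 j p) then 1 else (0::real))"
    by (rule sum.reindex_bij_betw[OF \<phi>])
  also have "\<dots> \<le> \<delta> * real (card (perms N))"
    using rest_mean_max_tail[OF r _ yc c0 \<delta>] T
    by (simp add: y_def c_def pop_var_def perms_def)
  finally show ?thesis unfolding perm_pmf_def
    using bad by (intro prob_from_count[OF finite_perms ne]) (auto simp: perms_def y_def)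
qed

(* sigma^2_{>,k} is at most the rest mean Z_{k-1} of (x - c)^2: the unobserved positions are k..N. *)
lemma var_fwd_le_rest_mean:
  assumes p: "p \<in> perms N" and k: "1 \<le> k" "k \<le> N"
  shows "var_fwd N x k p \<le> rest_mean N (\<lambda>i. (x i - c)^2) 1 (k - 1) p"
proof -
  have "var_fwd N x k p \<le> (\<Sum>l\<in>{1..N}-{1..<k}. (x (p l) - c)^2) / real (card ({1..N}-{1..<k}))"
    unfolding var_fwd_def using k by (intro cond_var_draw_le[OF p]) auto
  also have "{1..N}-{1..<k} = {1 + (k - 1)..N}" using k by auto
  finally show ?thesis by (simp add: rest_mean_def)
qed

(* Reversal of the positions 1..N; it turns backward conditioning into forward conditioning. *)
definition reverse_pos :: "nat \<Rightarrow> nat \<Rightarrow> nat" where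
  "reverse_pos N l = (if l \<in> {1..N} then Suc N - l else l)"

lemma reverse_pos_permutes: "reverse_pos N permutes {1..N}"
proof (rule bij_imp_permutes)
  show "bij_betw (reverse_pos N) {1..N} {1..N}"
    by (rule bij_betw_byWitness[where f' = "reverse_pos N"]) (auto simp: reverse_pos_def)
qed (simp add: reverse_pos_def del: atLeastAtMost_iff)

lemma bij_betw_reverse_pos: "bij_betw (\<lambda>p. p \<circ> reverse_pos N) (perms N) (perms N)"
proof -
  have inv: "p \<circ> reverse_pos N \<circ> reverse_pos N = p" for p :: "nat \<Rightarrow> nat"
    by (auto simp: fun_eq_iff reverse_pos_def)
  have img: "(\<lambda>p. p \<circ> reverse_pos N) ` perms N \<subseteq> perms N"
    using permutes_compose[OF reverse_pos_permutes] by (auto simp: perms_def)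
  show ?thesis
    by (rule bij_betw_byWitness[where f' = "\<lambda>p. p \<circ> reverse_pos N"]) (use inv img in auto)
qed

(* sigma^2_{<,k+1} is at most the rest mean Z_{N-k-1} of (x - c)^2 along the reversed order: the
   unobserved positions 1..k+1 are the last k+1 positions of the reversed permutation. *)
lemma var_bwd_le_rest_mean:
  assumes p: "p \<in> perms N" and k: "k + 1 \<le> N"
  shows "var_bwd N x (k + 1) p \<le> rest_mean N (\<lambda>i. (x i - c)^2) 1 (N - k - 1) (p \<circ> reverse_pos N)"
proof -
  have "var_bwd N x (k + 1) p
      \<le> (\<Sum>l\<in>{1..N}-{k+1<..N}. (x (p l) - c)^2) / real (card ({1..N}-{k+1<..N}))"
    unfolding var_bwd_def using k by (intro cond_var_draw_le[OF p]) auto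
  also have "{1..N}-{k+1<..N} = {1..k+1}" using k by auto
  also have "(\<Sum>l\<in>{1..k+1}. (x (p l) - c)^2)
      = (\<Sum>l\<in>{1 + (N - k - 1)..N}. (x ((p \<circ> reverse_pos N) l) - c)^2)"
    by (rule sum.reindex_bij_witness[of _ "\<lambda>l. Suc N - l" "\<lambda>l. Suc N - l"])
       (use k in \<open>auto simp: reverse_pos_def\<close>)
  also have "card {1..k+1} = Suc N - (1 + (N - k - 1))" using k by simp
  finally show ?thesis by (simp add: rest_mean_def)
qed

lemma var_fwd_max_bound:
  assumes n: "2 \<le> n" "n \<le> N" and \<delta>: "0 < \<delta>" "\<delta> \<le> 1"
  shows "measure_pmf.prob (perm_pmf N)
           {p. (MAX k\<in>{1..n}. var_fwd N x k p)
               \<le> pop_var N x + sqrt (pop_var N x) * (pop_max N x - pop_min N x) * (real n - 1)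
                  / (real N - real n + 1) * sqrt (2 * ln (1 / \<delta>) / (real n - 1))}
         \<ge> 1 - \<delta>"
proof -
  define T where "T = pop_var N x + sqrt (pop_var N x) * (pop_max N x - pop_min N x) * (real n - 1)
                  / (real N - real n + 1) * sqrt (2 * ln (1 / \<delta>) / (real n - 1))"
  have "real (n - 1) = real n - 1" using n by (simp add: of_nat_diff)
  then have T_r: "T = pop_var N x + sqrt (pop_var N x) * (pop_max N x - pop_min N x) * real (n - 1)
                  / (real N - real (n - 1)) * sqrt (2 * ln (1 / \<delta>) / real (n - 1))"
    by (simp add: T_def algebra_simps)
  have "measure_pmf.prob (perm_pmf N) {p. (MAX k\<in>{1..n}. var_fwd N x k p) \<le> T} \<ge> 1 - \<delta>"
  proof (rule prob_good_from_rest_mean[OF \<delta> _ _ bij_betw_id _ T_r])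
    show "1 \<le> n - 1" "n - 1 < N" using n by auto
    fix p assume p: "p \<in> perms N" and "\<not> (MAX k\<in>{1..n}. var_fwd N x k p) \<le> T"
    then obtain k where k: "k \<in> {1..n}" "T < var_fwd N x k p"
      using n by (auto simp: Max_le_iff not_le)
    then have "T < rest_mean N (\<lambda>i. (x i - pop_mean N x)^2) 1 (k - 1) p"
      using var_fwd_le_rest_mean[OF p, of k x "pop_mean N x"] n by auto
    then show "\<exists>j\<le>n - 1. T < rest_mean N (\<lambda>i. (x i - pop_mean N x)^2) 1 j (id p)"
      using k by (intro exI[of _ "k - 1"]) auto
  qed
  then show ?thesis by (simp only: T_def)
qed

lemma var_bwd_max_bound:
  assumes n: "1 \<le> n" "n + 2 \<le> N" and \<delta>: "0 < \<delta>" "\<delta> \<le> 1"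
  shows "measure_pmf.prob (perm_pmf N)
           {p. (MAX k\<in>{n..N-1}. var_bwd N x (k + 1) p)
               \<le> pop_var N x + sqrt (pop_var N x) * (pop_max N x - pop_min N x) * (real N - real n - 1)
                  / (real n + 1) * sqrt (2 * ln (1 / \<delta>) / (real N - real n - 1))}
         \<ge> 1 - \<delta>"
proof -
  define T where "T = pop_var N x + sqrt (pop_var N x) * (pop_max N x - pop_min N x) * (real N - real n - 1)
                  / (real n + 1) * sqrt (2 * ln (1 / \<delta>) / (real N - real n - 1))"
  have "real (N - n - 1) = real N - real n - 1" using n by (simp add: of_nat_diff)
  then have T_r: "T = pop_var N x + sqrt (pop_var N x) * (pop_max N x - pop_min N x) * real (N - n - 1)
                  / (real N - real (N - n - 1)) * sqrt (2 * ln (1 / \<delta>) / real (N - n - 1))"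
    by (simp add: T_def algebra_simps)
  have "measure_pmf.prob (perm_pmf N) {p. (MAX k\<in>{n..N-1}. var_bwd N x (k + 1) p) \<le> T} \<ge> 1 - \<delta>"
  proof (rule prob_good_from_rest_mean[OF \<delta> _ _ bij_betw_reverse_pos _ T_r])
    show "1 \<le> N - n - 1" "N - n - 1 < N" using n by auto
    fix p assume p: "p \<in> perms N" and "\<not> (MAX k\<in>{n..N-1}. var_bwd N x (k + 1) p) \<le> T"
    then obtain k where k: "k \<in> {n..N-1}" "T < var_bwd N x (k + 1) p"
      using n by (auto simp: Max_le_iff not_le)
    then have "T < rest_mean N (\<lambda>i. (x i - pop_mean N x)^2) 1 (N - k - 1) (p \<circ> reverse_pos N)"
    proof -
      have "k + 1 \<le> N" using k(1) n by auto
      then show ?thesis using var_bwd_le_rest_mean[OF p, of k x "pop_mean N x"] k(2) by linarith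
    qed
    then show "\<exists>j\<le>N - n - 1. T < rest_mean N (\<lambda>i. (x i - pop_mean N x)^2) 1 j (p \<circ> reverse_pos N)"
      using k by (intro exI[of _ "N - k - 1"]) auto
  qed
  then show ?thesis by (simp only: T_def)
qed

theorem lemma6:
  fixes N n :: nat and x :: "nat \<Rightarrow> real" and \<delta> :: real
  assumes "2 \<le> N" and "0 < \<delta>" and "\<delta> \<le> 1"
  shows "(2 \<le> n \<and> n \<le> N \<longrightarrow>
           measure_pmf.prob (perm_pmf N)
             {p. (MAX k\<in>{1..n}. var_fwd N x k p)
                 \<le> pop_var N x + sqrt (pop_var N x) * (pop_max N x - pop_min N x) * (real n - 1)
                    / (real N - real n + 1) * sqrt (2 * ln (1 / \<delta>) / (real n - 1))}
           \<ge> 1 - \<delta>)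
       \<and> (1 \<le> n \<and> n + 2 \<le> N \<longrightarrow>
           measure_pmf.prob (perm_pmf N)
             {p. (MAX k\<in>{n..N-1}. var_bwd N x (k + 1) p)
                 \<le> pop_var N x + sqrt (pop_var N x) * (pop_max N x - pop_min N x) * (real N - real n - 1)
                    / (real n + 1) * sqrt (2 * ln (1 / \<delta>) / (real N - real n - 1))}
           \<ge> 1 - \<delta>)"
  using var_fwd_max_bound[OF _ _ assms(2,3)] var_bwd_max_bound[OF _ _ assms(2,3)] by blast

end
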